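(* Let $n\ge7$ and $G\cong K_3\cup K_{1,n-4}$ (a graph on $n$ vertices). Then $q(\overline{G})=2$, and $\overline G$ has a matrix realization in $S(\overline G)$ with exactly two distinct eigenvalues that has the Strong Spectral Property.
   Context: $\overline G$ denotes the complement of $G$; $K_{1,n-4}$ is a star and $\cup$ is disjoint union. For a graph $H$ on $n$ vertices, $S(H)$ is the set of real symmetric matrices $A$ with $a_{ij}\ne0$ ($i\ne j$) iff $ij\in E(H)$, diagonal unrestricted, and $q(H)$ is the minimum number of distinct eigenvalues over $S(H)$. A symmetric $A$ has the Strong Spectral Property if the only symmetric $X$ with $A\circ X=O$, $I\circ X=O$, $AX=XA$ is $X=O$ ($\circ$ the entrywise product). *)

theory Defs
  imports Complex_Main
begin

text \<open>Graphs on the vertex set {0..<n} are given by an edge predicate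
  E :: nat \<Rightarrow> nat \<Rightarrow> bool (only arguments < n matter).
  Real n x n matrices are functions nat \<Rightarrow> nat \<Rightarrow> real, only entries with
  indices < n matter.\<close>

definition mat_mult :: "nat \<Rightarrow> (nat \<Rightarrow> nat \<Rightarrow> real) \<Rightarrow> (nat \<Rightarrow> nat \<Rightarrow> real) \<Rightarrow> nat \<Rightarrow> nat \<Rightarrow> real" where
  "mat_mult n A B i j = (\<Sum>k<n. A i k * B k j)"

definition sym_mat :: "nat \<Rightarrow> (nat \<Rightarrow> nat \<Rightarrow> real) \<Rightarrow> bool" where
  "sym_mat n A \<longleftrightarrow> (\<forall>i<n. \<forall>j<n. A i j = A j i)"

definition S_graph :: "nat \<Rightarrow> (nat \<Rightarrow> nat \<Rightarrow> bool) \<Rightarrow> (nat \<Rightarrow> nat \<Rightarrow> real) set" where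
  "S_graph n H = {A. sym_mat n A \<and> (\<forall>i<n. \<forall>j<n. i \<noteq> j \<longrightarrow> (A i j \<noteq> 0 \<longleftrightarrow> H i j))}"

definition eigenvalues :: "nat \<Rightarrow> (nat \<Rightarrow> nat \<Rightarrow> real) \<Rightarrow> real set" where
  "eigenvalues n A = {mu. \<exists>v::nat \<Rightarrow> real. (\<exists>i<n. v i \<noteq> 0) \<and>
      (\<forall>i<n. (\<Sum>j<n. A i j * v j) = mu * v i)}"

definition q_graph :: "nat \<Rightarrow> (nat \<Rightarrow> nat \<Rightarrow> bool) \<Rightarrow> nat" where
  "q_graph n H = (LEAST k. \<exists>A \<in> S_graph n H. card (eigenvalues n A) = k)"

definition SSP :: "nat \<Rightarrow> (nat \<Rightarrow> nat \<Rightarrow> real) \<Rightarrow> bool" where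
  "SSP n A \<longleftrightarrow> (\<forall>X. sym_mat n X \<and> (\<forall>i<n. \<forall>j<n. A i j * X i j = 0) \<and> (\<forall>i<n. X i i = 0)
      \<and> (\<forall>i<n. \<forall>j<n. mat_mult n A X i j = mat_mult n X A i j)
      \<longrightarrow> (\<forall>i<n. \<forall>j<n. X i j = 0))"

definition complement :: "(nat \<Rightarrow> nat \<Rightarrow> bool) \<Rightarrow> nat \<Rightarrow> nat \<Rightarrow> bool" where
  "complement E i j \<longleftrightarrow> i \<noteq> j \<and> \<not> E i j"

definition K3_star :: "nat \<Rightarrow> nat \<Rightarrow> bool" where
  "K3_star i j \<longleftrightarrow> i \<noteq> j \<and> ((i < 3 \<and> j < 3) \<or> (i = 3 \<and> 4 \<le> j) \<or> (j = 3 \<and> 4 \<le> i))"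

definition graph_iso :: "nat \<Rightarrow> (nat \<Rightarrow> nat \<Rightarrow> bool) \<Rightarrow> (nat \<Rightarrow> nat \<Rightarrow> bool) \<Rightarrow> bool" where
  "graph_iso n G H \<longleftrightarrow> (\<exists>f. bij_betw f {..<n} {..<n} \<and> (\<forall>i<n. \<forall>j<n. G i j \<longleftrightarrow> H (f i) (f j)))"

end

theory Submission
  imports Defs "Jordan_Normal_Form.Schur_Decomposition"
begin

text \<open>Lower bound: the characteristic polynomial of a real symmetric matrix splits over the
  reals, and the sum of the squares of its entries is the sum of the squares of its eigenvalues
  (the trace of its square, read off a Schur form). Hence a symmetric matrix with a single
  eigenvalue \<open>\<mu>\<close> is \<open>\<mu> I\<close>, and every graph with an edge has \<open>q \<ge> 2\<close>.

  Upper bound: after relabelling, \<open>G\<close> is the triangle on 0, 1, 2 together with the star centred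
  at 3. Its complement is realized by the Gram matrix \<open>A = U U\<^sup>T\<close> of the rows of an explicit
  \<open>n \<times> 3\<close> matrix \<open>U\<close> whose columns are orthogonal of equal squared length \<open>s\<close>, so \<open>A\<^sup>2 = s A\<close>
  and the spectrum of \<open>A\<close> is \<open>{0, s}\<close>. For the SSP, a symmetric \<open>X\<close> with \<open>A \<circ> X = 0\<close> and
  zero diagonal lives on the edges of \<open>G\<close>, and the entries \<open>(t, l)\<close> of \<open>A X = X A\<close> with \<open>t\<close> in
  the triangle and \<open>l\<close> a leaf of the star force \<open>X = 0\<close>.\<close>

section \<open>Symmetric matrices with few eigenvalues\<close>

abbreviation mat_of_fun :: "nat \<Rightarrow> (nat \<Rightarrow> nat \<Rightarrow> 'a) \<Rightarrow> 'a mat" where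
  "mat_of_fun n B \<equiv> mat n n (\<lambda>(i, j). B i j)"

lemma eigenvalue_mat_of_fun_iff:
  fixes B :: "nat \<Rightarrow> nat \<Rightarrow> 'a :: field"
  shows "eigenvalue (mat_of_fun n B) \<mu> \<longleftrightarrow>
    (\<exists>v. (\<exists>i<n. v i \<noteq> 0) \<and> (\<forall>i<n. (\<Sum>j<n. B i j * v j) = \<mu> * v i))"
    (is "_ \<longleftrightarrow> (\<exists>v. ?eigvec v)")
proof -
  have row_mult: "vec n (B i) \<bullet> vec n v = (\<Sum>j<n. B i j * v j)" for v i
    by (auto simp: scalar_prod_def atLeast0LessThan intro!: sum.cong)
  have eigenvector_iff: "eigenvector (mat_of_fun n B) (vec n v) \<mu> \<longleftrightarrow> ?eigvec v" for v
    by (auto simp: eigenvector_def vec_eq_iff row_mult)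
  show ?thesis
  proof
    assume "eigenvalue (mat_of_fun n B) \<mu>"
    then obtain w where w: "eigenvector (mat_of_fun n B) w \<mu>"
      unfolding eigenvalue_def by blast
    then have "w = vec n (\<lambda>i. w $ i)"
      by (auto simp: eigenvector_def)
    with w eigenvector_iff show "\<exists>v. ?eigvec v" by metis
  next
    assume "\<exists>v. ?eigvec v"
    with eigenvector_iff show "eigenvalue (mat_of_fun n B) \<mu>"
      unfolding eigenvalue_def by blast
  qed
qed

lemma eigenvalues_conv_eigenvalue: "eigenvalues n B = {\<mu>. eigenvalue (mat_of_fun n B) \<mu>}"
  by (simp add: eigenvalues_def eigenvalue_mat_of_fun_iff)

lemma finite_eigenvalues: "finite (eigenvalues n B)"
proof -
  have "eigenvalues n B \<subseteq> {r. poly (char_poly (mat_of_fun n B)) r = 0}"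
    by (auto simp: eigenvalues_conv_eigenvalue eigenvalue_root_char_poly[of _ n])
  moreover have "char_poly (mat_of_fun n B) \<noteq> 0"
    using degree_monic_char_poly[of "mat_of_fun n B" n] by auto
  ultimately show ?thesis
    using poly_roots_finite finite_subset by blast
qed

lemma sym_mat_bilinear_swap:
  assumes "sym_mat n B"
  shows "(\<Sum>i<n. y i * (\<Sum>j<n. B i j * x j)) = (\<Sum>i<n. x i * (\<Sum>j<n. B i j * y j))"
proof -
  have "(\<Sum>i<n. y i * (\<Sum>j<n. B i j * x j)) = (\<Sum>i<n. \<Sum>j<n. x j * B j i * y i)"
    using assms by (auto simp: sym_mat_def sum_distrib_left mult_ac intro!: sum.cong)
  also have "\<dots> = (\<Sum>j<n. \<Sum>i<n. x j * B j i * y i)"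
    by (rule sum.swap)
  finally show ?thesis
    by (simp add: sum_distrib_left mult.assoc)
qed

text \<open>A complex eigenvector \<open>x + i y\<close> of \<open>B\<close> with eigenvalue \<open>p + i q\<close> gives
  \<open>y\<^sup>T B x - x\<^sup>T B y = -q (|x|\<^sup>2 + |y|\<^sup>2)\<close>, which vanishes by symmetry.\<close>
lemma sym_mat_complex_eigenvalue_real:
  fixes B :: "nat \<Rightarrow> nat \<Rightarrow> real"
  assumes sym: "sym_mat n B"
    and eig: "eigenvalue (mat_of_fun n (\<lambda>i j. complex_of_real (B i j))) e"
  shows "Im e = 0 \<and> Re e \<in> eigenvalues n B"
proof -
  obtain v where "\<exists>i<n. v i \<noteq> 0"
    and ev: "\<And>i. i < n \<Longrightarrow> (\<Sum>j<n. complex_of_real (B i j) * v j) = e * v i"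
    using eig unfolding eigenvalue_mat_of_fun_iff by blast
  then obtain i0 where i0: "i0 < n" "v i0 \<noteq> 0"
    by blast
  define x where "x j = Re (v j)" for j
  define y where "y j = Im (v j)" for j
  have Bx: "(\<Sum>j<n. B i j * x j) = Re e * x i - Im e * y i" if "i < n" for i
    using arg_cong[OF ev[OF that], of Re] by (simp add: x_def y_def)
  have By: "(\<Sum>j<n. B i j * y j) = Im e * x i + Re e * y i" if "i < n" for i
    using arg_cong[OF ev[OF that], of Im] by (simp add: x_def y_def algebra_simps)
  have "(\<Sum>i<n. y i * (Re e * x i - Im e * y i)) = (\<Sum>i<n. x i * (Im e * x i + Re e * y i))"
    using sym_mat_bilinear_swap[OF sym, of y x] by (simp add: Bx By)
  then have "Im e * (\<Sum>i<n. x i ^ 2 + y i ^ 2) = 0"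
    by (simp add: algebra_simps power2_eq_square sum.distrib sum_distrib_left sum_subtractf)
  moreover have "x i0 \<noteq> 0 \<or> y i0 \<noteq> 0"
    using i0 by (auto simp: x_def y_def complex_eq_iff)
  then have "(\<Sum>i<n. x i ^ 2 + y i ^ 2) > 0"
    using i0 by (intro sum_pos2[of _ i0]) (auto simp: sum_power2_gt_zero_iff)
  ultimately have "Im e = 0"
    by simp
  moreover have "Re e \<in> eigenvalues n B"
  proof (cases "x i0 = 0")
    case False
    then show ?thesis
      unfolding eigenvalues_def using i0 Bx \<open>Im e = 0\<close> by (intro CollectI exI[of _ x]) auto
  next
    case True
    then have "y i0 \<noteq> 0"
      using \<open>x i0 \<noteq> 0 \<or> y i0 \<noteq> 0\<close> by simp
    then show ?thesis
      unfolding eigenvalues_def using i0 By \<open>Im e = 0\<close> by (intro CollectI exI[of _ y]) auto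
  qed
  ultimately show ?thesis
    by blast
qed

lemma sym_mat_char_poly_splits:
  fixes B :: "nat \<Rightarrow> nat \<Rightarrow> real"
  assumes sym: "sym_mat n B"
  obtains es where "char_poly (mat_of_fun n B) = (\<Prod>e\<leftarrow>es. [:- e, 1:])"
    and "set es \<subseteq> eigenvalues n B"
proof -
  define Bc where "Bc = mat_of_fun n (\<lambda>i j. complex_of_real (B i j))"
  have Bc: "Bc \<in> carrier_mat n n"
    by (simp add: Bc_def)
  obtain as where as: "char_poly Bc = (\<Prod>a\<leftarrow>as. [:- a, 1:])"
    using char_poly_factorized[OF Bc] by blast
  have real: "Im a = 0 \<and> Re a \<in> eigenvalues n B" if "a \<in> set as" for a
  proof -
    have "poly (char_poly Bc) a = 0"
      unfolding as using that by (rule linear_poly_root)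
    then show ?thesis
      using sym_mat_complex_eigenvalue_real[OF sym] eigenvalue_root_char_poly[OF Bc]
      by (simp add: Bc_def)
  qed
  interpret of_real_poly: map_poly_inj_idom_hom complex_of_real ..
  have "Bc = of_real_hom.mat_hom (mat_of_fun n B)"
    by (auto simp: Bc_def)
  then have "map_poly complex_of_real (char_poly (mat_of_fun n B)) = char_poly Bc"
    by (simp add: of_real_hom.char_poly_hom[of _ n])
  also have "\<dots> = map_poly of_real (\<Prod>e\<leftarrow>map Re as. [:- e, 1:])"
    unfolding as of_real_poly.hom_prod_list using real
    by (auto simp: complex_eq_iff intro!: arg_cong[of _ _ prod_list])
  finally have "char_poly (mat_of_fun n B) = (\<Prod>e\<leftarrow>map Re as. [:- e, 1:])"
    by simp
  moreover have "set (map Re as) \<subseteq> eigenvalues n B"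
    using real by auto
  ultimately show ?thesis
    using that by blast
qed

definition mat_trace :: "'a :: comm_ring_1 mat \<Rightarrow> 'a" where
  "mat_trace A = (\<Sum>i<dim_row A. A $$ (i, i))"

lemma mat_trace_mult_comm:
  assumes "A \<in> carrier_mat n m" and "B \<in> carrier_mat m n"
  shows "mat_trace (A * B) = mat_trace (B * A)"
proof -
  have "mat_trace (A * B) = (\<Sum>i<n. \<Sum>k<m. A $$ (i, k) * B $$ (k, i))"
    using assms by (auto simp: mat_trace_def scalar_prod_def atLeast0LessThan intro!: sum.cong)
  also have "\<dots> = (\<Sum>k<m. \<Sum>i<n. B $$ (k, i) * A $$ (i, k))"
    by (subst sum.swap) (simp add: mult.commute)
  also have "\<dots> = mat_trace (B * A)"
    using assms by (auto simp: mat_trace_def scalar_prod_def atLeast0LessThan intro!: sum.cong)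
  finally show ?thesis .
qed

lemma mat_trace_similar:
  assumes "similar_mat_wit A B P Q"
  shows "mat_trace A = mat_trace B"
proof -
  obtain n where n: "A \<in> carrier_mat n n" "B \<in> carrier_mat n n" "P \<in> carrier_mat n n"
    "Q \<in> carrier_mat n n" and QP: "Q * P = 1\<^sub>m n" and A: "A = P * B * Q"
    using similar_mat_witD[OF refl assms] by blast
  have "mat_trace A = mat_trace (P * (B * Q))"
    using A n by (simp add: assoc_mult_mat[of _ n n _ n _ n])
  also have "\<dots> = mat_trace (B * Q * P)"
    using n by (intro mat_trace_mult_comm[of _ n n]) auto
  also have "\<dots> = mat_trace B"
    using n QP by (simp add: assoc_mult_mat[of _ n n _ n _ n])
  finally show ?thesis .
qed

lemma upper_triangular_square_diag:
  fixes T :: "'a :: comm_ring_1 mat"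
  assumes T: "T \<in> carrier_mat n n" and ut: "upper_triangular T" and i: "i < n"
  shows "(T * T) $$ (i, i) = T $$ (i, i) ^ 2"
proof -
  have off_diag: "T $$ (i, k) * T $$ (k, i) = 0" if "k < n" "k \<noteq> i" for k
    using that T i ut by (cases "k < i") (auto simp: upper_triangular_def)
  have "(T * T) $$ (i, i) = (\<Sum>k<n. T $$ (i, k) * T $$ (k, i))"
    using T i by (auto simp: scalar_prod_def atLeast0LessThan intro!: sum.cong)
  also have "\<dots> = (\<Sum>k\<in>{i}. T $$ (i, k) * T $$ (k, i))"
    using i off_diag by (intro sum.mono_neutral_right) auto
  finally show ?thesis
    by (simp add: power2_eq_square)
qed

text \<open>Both sides are the trace of the square of \<open>B\<close>, computed entrywise on the left and on
  a Schur form on the right.\<close>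
lemma sym_mat_sum_squares_eq:
  fixes B :: "nat \<Rightarrow> nat \<Rightarrow> real"
  assumes sym: "sym_mat n B" and char: "char_poly (mat_of_fun n B) = (\<Prod>e\<leftarrow>es. [:- e, 1:])"
  shows "(\<Sum>i<n. \<Sum>j<n. B i j ^ 2) = (\<Sum>e\<leftarrow>es. e ^ 2)"
proof -
  define M where "M = mat_of_fun n B"
  have M: "M \<in> carrier_mat n n"
    by (simp add: M_def)
  obtain T P Q where "schur_decomposition M es = (T, P, Q)"
    by (metis prod_cases3)
  with schur_decomposition[OF M char[folded M_def]]
  have sim: "similar_mat_wit M T P Q" and ut: "upper_triangular T" and diag: "diag_mat T = es"
    by auto
  have T: "T \<in> carrier_mat n n"
    using similar_mat_witD2[OF M sim] by auto
  have "(\<Sum>i<n. \<Sum>j<n. B i j ^ 2) = mat_trace (M * M)"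
    using sym M by (auto simp: M_def mat_trace_def sym_mat_def scalar_prod_def atLeast0LessThan
        power2_eq_square intro!: sum.cong)
  also have "\<dots> = mat_trace (T * T)"
    using mat_trace_similar[OF similar_mat_wit_pow[OF sim, of 2]] M T
    by (simp add: numeral_2_eq_2)
  also have "\<dots> = (\<Sum>i<n. T $$ (i, i) ^ 2)"
    using T ut upper_triangular_square_diag[OF T ut] by (simp add: mat_trace_def)
  also have "\<dots> = (\<Sum>e\<leftarrow>es. e ^ 2)"
    using T by (simp add: diag[symmetric] diag_mat_def interv_sum_list_conv_sum_set_nat atLeast0LessThan)
  finally show ?thesis .
qed

lemma sym_mat_eq_0_if_eigenvalues_subset_0:
  assumes sym: "sym_mat n B" and eig: "eigenvalues n B \<subseteq> {0}" and i: "i < n" and j: "j < n"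
  shows "B i j = 0"
proof -
  obtain es where char: "char_poly (mat_of_fun n B) = (\<Prod>e\<leftarrow>es. [:- e, 1:])"
    and "set es \<subseteq> eigenvalues n B"
    using sym_mat_char_poly_splits[OF sym] by blast
  with eig have "set es \<subseteq> {0}"
    by blast
  then have "(\<Sum>e\<leftarrow>es. e ^ 2) = 0"
    by (induction es) auto
  then have "(\<Sum>i<n. \<Sum>j<n. B i j ^ 2) = 0"
    using sym_mat_sum_squares_eq[OF sym char] by simp
  then have "(\<Sum>j<n. B i j ^ 2) = 0"
    using i by (subst (asm) sum_nonneg_eq_0_iff) (auto intro: sum_nonneg)
  then show ?thesis
    using j by (subst (asm) sum_nonneg_eq_0_iff) auto
qed

lemma eigenvalues_diag_shift:
  "r \<in> eigenvalues n (\<lambda>i j. A i j - (if i = j then c else 0)) \<longleftrightarrow> r + c \<in> eigenvalues n A"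
proof -
  have "(\<Sum>j<n. (A i j - (if i = j then c else 0)) * v j) = (\<Sum>j<n. A i j * v j) - c * v i"
    if "i < n" for i and v :: "nat \<Rightarrow> real"
  proof -
    have "(\<Sum>j<n. (if i = j then c else 0) * v j) = (\<Sum>j<n. if i = j then c * v j else 0)"
      by (rule sum.cong) auto
    with that show ?thesis
      by (simp add: left_diff_distrib sum_subtractf)
  qed
  then have "(\<forall>i<n. (\<Sum>j<n. (A i j - (if i = j then c else 0)) * v j) = r * v i) \<longleftrightarrow>
      (\<forall>i<n. (\<Sum>j<n. A i j * v j) = (r + c) * v i)" for v
    by (simp add: diff_eq_eq distrib_right)
  then show ?thesis
    unfolding eigenvalues_def by simp
qed

lemma sym_mat_card_eigenvalues_ge_2:
  assumes sym: "sym_mat n A" and ij: "i < n" "j < n" "i \<noteq> j" "A i j \<noteq> 0"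
  shows "2 \<le> card (eigenvalues n A)"
proof (rule ccontr)
  assume "\<not> 2 \<le> card (eigenvalues n A)"
  then have "card (eigenvalues n A) \<le> Suc 0"
    by simp
  then have "\<forall>x\<in>eigenvalues n A. \<forall>y\<in>eigenvalues n A. x = y"
    using card_le_Suc0_iff_eq[OF finite_eigenvalues] by blast
  then obtain \<mu> where \<mu>: "eigenvalues n A \<subseteq> {\<mu>}"
    by blast
  define B where "B i j = A i j - (if i = j then \<mu> else 0)" for i j
  have "sym_mat n B"
    using sym by (auto simp: sym_mat_def B_def)
  moreover have "eigenvalues n B \<subseteq> {0}"
    using \<mu> eigenvalues_diag_shift[of _ n A \<mu>] by (auto simp: B_def[abs_def])
  ultimately have "B i j = 0"
    using ij by (intro sym_mat_eq_0_if_eigenvalues_subset_0)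
  with ij show False
    by (simp add: B_def)
qed

lemma q_graph_eq_2:
  assumes A: "A \<in> S_graph n H" and card: "card (eigenvalues n A) = 2"
    and edge: "i < n" "j < n" "i \<noteq> j" "H i j"
  shows "q_graph n H = 2"
  unfolding q_graph_def
proof (rule Least_equality)
  show "\<exists>A\<in>S_graph n H. card (eigenvalues n A) = 2"
    using A card by blast
next
  fix k assume "\<exists>B\<in>S_graph n H. card (eigenvalues n B) = k"
  then obtain B where "B \<in> S_graph n H" and k: "card (eigenvalues n B) = k"
    by blast
  then have "sym_mat n B" and "B i j \<noteq> 0"
    using edge by (auto simp: S_graph_def)
  then show "2 \<le> k"
    using sym_mat_card_eigenvalues_ge_2 edge k by blast
qed

lemma eigenvalues_eq_if_square_eq_scale:
  assumes sq: "\<And>i j. i < n \<Longrightarrow> j < n \<Longrightarrow> mat_mult n B B i j = S * B i j"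
    and S: "S \<noteq> 0" and l: "l < n" "B l l \<noteq> 0" "B l l \<noteq> S"
  shows "eigenvalues n B = {0, S}"
proof (intro equalityI subsetI)
  fix r assume "r \<in> eigenvalues n B"
  then obtain v i0 where v: "i0 < n" "v i0 \<noteq> 0"
    and ev: "\<And>i. i < n \<Longrightarrow> (\<Sum>j<n. B i j * v j) = r * v i"
    unfolding eigenvalues_def by blast
  have "r * (r * v i0) = (\<Sum>k<n. B i0 k * (r * v k))"
    using ev[OF v(1)] by (simp add: sum_distrib_left[symmetric] mult.left_commute)
  also have "\<dots> = (\<Sum>k<n. \<Sum>j<n. B i0 k * B k j * v j)"
    by (rule sum.cong) (simp_all add: ev[symmetric] sum_distrib_left mult.assoc)
  also have "\<dots> = (\<Sum>j<n. \<Sum>k<n. B i0 k * B k j * v j)"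
    by (rule sum.swap)
  also have "\<dots> = (\<Sum>j<n. S * B i0 j * v j)"
    using v sq[symmetric] by (simp add: mat_mult_def sum_distrib_right)
  also have "\<dots> = S * (r * v i0)"
    using ev[OF v(1)] by (simp add: sum_distrib_left[symmetric] mult.assoc)
  finally have "(r * (r - S)) * v i0 = 0"
    by (simp add: algebra_simps)
  with v have "r * (r - S) = 0"
    by simp
  then show "r \<in> {0, S}"
    by auto
next
  have col_ev: "(\<Sum>j<n. B i j * B j l) = S * B i l" if "i < n" for i
    using sq[OF that l(1)] by (simp add: mat_mult_def)
  fix r assume "r \<in> {0, S}"
  then consider "r = 0" | "r = S"
    by auto
  then show "r \<in> eigenvalues n B"
  proof cases
    case 1
    define v where "v j = (if j = l then S else 0) - B j l" for j
    have "(\<Sum>j<n. B i j * v j) = r * v i" if "i < n" for i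
    proof -
      have "(\<Sum>j<n. B i j * v j) = (\<Sum>j<n. B i j * (if j = l then S else 0)) - (\<Sum>j<n. B i j * B j l)"
        by (simp add: v_def right_diff_distrib sum_subtractf)
      also have "(\<Sum>j<n. B i j * (if j = l then S else 0)) = B i l * S"
        using l by (simp add: if_distrib cong: if_cong)
      finally show ?thesis
        using col_ev[OF that] 1 by simp
    qed
    moreover have "v l \<noteq> 0"
      using l by (simp add: v_def)
    ultimately show ?thesis
      unfolding eigenvalues_def using l by blast
  next
    case 2
    then show ?thesis
      unfolding eigenvalues_def using l col_ev by (intro CollectI exI[of _ "\<lambda>j. B j l"]) auto
  qed
qed

section \<open>Relabelling vertices\<close>

lemma bij_betw_lessThan_inverse:
  assumes "bij_betw f {..<n} {..<n}"
  obtains g where "\<And>k. k < n \<Longrightarrow> g k < n" "\<And>k. k < n \<Longrightarrow> f (g k) = k"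
    "\<And>i. i < n \<Longrightarrow> g (f i) = i"
proof
  show "inv_into {..<n} f k < n" if "k < n" for k
    using that assms by (meson bij_betwE bij_betw_inv_into lessThan_iff)
  show "f (inv_into {..<n} f k) = k" if "k < n" for k
    using that assms by (simp add: bij_betw_inv_into_right)
  show "inv_into {..<n} f (f i) = i" if "i < n" for i
    using that assms by (simp add: bij_betw_inv_into_left)
qed

lemma S_graph_complement_permute:
  assumes f: "bij_betw f {..<n} {..<n}" and iso: "\<And>i j. i < n \<Longrightarrow> j < n \<Longrightarrow> G i j \<longleftrightarrow> H (f i) (f j)"
    and A: "A \<in> S_graph n (complement H)"
  shows "(\<lambda>i j. A (f i) (f j)) \<in> S_graph n (complement G)"
proof -
  have f_less: "f i < n" if "i < n" for i
    using that f by (auto dest: bij_betwE)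
  have "f i \<noteq> f j" if "i < n" "j < n" "i \<noteq> j" for i j
    using that f by (auto simp: bij_betw_def inj_on_def)
  with A f_less iso show ?thesis
    by (auto simp: S_graph_def sym_mat_def complement_def)
qed

lemma eigenvalues_permute:
  assumes f: "bij_betw f {..<n} {..<n}"
  shows "eigenvalues n (\<lambda>i j. A (f i) (f j)) = eigenvalues n A"
proof -
  obtain g where g: "\<And>k. k < n \<Longrightarrow> g k < n" "\<And>k. k < n \<Longrightarrow> f (g k) = k"
    "\<And>i. i < n \<Longrightarrow> g (f i) = i"
    using bij_betw_lessThan_inverse[OF f] by blast
  have f_less: "f i < n" if "i < n" for i
    using that f by (auto dest: bij_betwE)
  have reindex: "(\<Sum>j<n. h (f j)) = (\<Sum>j<n. h j)" for h :: "nat \<Rightarrow> real"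
    using sum.reindex_bij_betw[OF f] .
  show ?thesis
  proof (intro equalityI subsetI)
    fix r assume "r \<in> eigenvalues n (\<lambda>i j. A (f i) (f j))"
    then obtain v k where v: "k < n" "v k \<noteq> 0"
      and ev: "\<And>i. i < n \<Longrightarrow> (\<Sum>j<n. A (f i) (f j) * v j) = r * v i"
      unfolding eigenvalues_def by blast
    have "(\<Sum>j<n. A i j * v (g j)) = r * v (g i)" if "i < n" for i
      using ev[OF g(1)[OF that]] reindex[of "\<lambda>j. A i j * v (g j)"] that g by simp
    moreover have "v (g (f k)) \<noteq> 0"
      using v g by simp
    ultimately show "r \<in> eigenvalues n A"
      unfolding eigenvalues_def using f_less[OF v(1)] by (intro CollectI exI[of _ "\<lambda>j. v (g j)"]) blast
  next
    fix r assume "r \<in> eigenvalues n A"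
    then obtain v k where v: "k < n" "v k \<noteq> 0"
      and ev: "\<And>i. i < n \<Longrightarrow> (\<Sum>j<n. A i j * v j) = r * v i"
      unfolding eigenvalues_def by blast
    have "(\<Sum>j<n. A (f i) (f j) * v (f j)) = r * v (f i)" if "i < n" for i
      using ev[OF f_less[OF that]] reindex[of "\<lambda>j. A (f i) j * v j"] by simp
    moreover have "v (f (g k)) \<noteq> 0"
      using v g by simp
    ultimately show "r \<in> eigenvalues n (\<lambda>i j. A (f i) (f j))"
      unfolding eigenvalues_def using g(1)[OF v(1)] by (intro CollectI exI[of _ "\<lambda>j. v (f j)"]) blast
  qed
qed

lemma SSP_permute:
  assumes f: "bij_betw f {..<n} {..<n}" and ssp: "SSP n A"
  shows "SSP n (\<lambda>i j. A (f i) (f j))"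
  unfolding SSP_def
proof (intro allI impI)
  fix X i j
  assume X: "sym_mat n X \<and> (\<forall>i<n. \<forall>j<n. A (f i) (f j) * X i j = 0) \<and> (\<forall>i<n. X i i = 0) \<and>
    (\<forall>i<n. \<forall>j<n. mat_mult n (\<lambda>i j. A (f i) (f j)) X i j = mat_mult n X (\<lambda>i j. A (f i) (f j)) i j)"
  assume ij: "i < n" "j < n"
  from X have X_zero: "\<forall>i<n. \<forall>j<n. A (f i) (f j) * X i j = 0"
    and X_comm: "\<forall>i<n. \<forall>j<n. mat_mult n (\<lambda>i j. A (f i) (f j)) X i j = mat_mult n X (\<lambda>i j. A (f i) (f j)) i j"
    by simp_all
  obtain g where g: "\<And>k. k < n \<Longrightarrow> g k < n" "\<And>k. k < n \<Longrightarrow> f (g k) = k"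
    "\<And>i. i < n \<Longrightarrow> g (f i) = i"
    using bij_betw_lessThan_inverse[OF f] by blast
  have f_less: "f i < n" if "i < n" for i
    using that f by (auto dest: bij_betwE)
  have reindex: "(\<Sum>m<n. h (f m)) = (\<Sum>m<n. h m)" for h :: "nat \<Rightarrow> real"
    using sum.reindex_bij_betw[OF f] .
  define Y where "Y k l = X (g k) (g l)" for k l
  have "sym_mat n Y \<and> (\<forall>k<n. \<forall>l<n. A k l * Y k l = 0) \<and> (\<forall>k<n. Y k k = 0) \<and>
    (\<forall>k<n. \<forall>l<n. mat_mult n A Y k l = mat_mult n Y A k l)"
  proof (intro conjI allI impI)
    show "sym_mat n Y" "\<And>k. k < n \<Longrightarrow> Y k k = 0"
      using X g(1) by (auto simp: sym_mat_def Y_def)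
    fix k l assume kl: "k < n" "l < n"
    have "A (f (g k)) (f (g l)) * X (g k) (g l) = 0"
      using X_zero g(1) kl by simp
    with g(2) kl show "A k l * Y k l = 0"
      by (simp add: Y_def)
    have "mat_mult n A Y k l = (\<Sum>m<n. A k (f m) * X (g (f m)) (g l))"
      unfolding mat_mult_def Y_def by (rule reindex[symmetric])
    also have "\<dots> = mat_mult n (\<lambda>i j. A (f i) (f j)) X (g k) (g l)"
      unfolding mat_mult_def using g(2,3) kl by (intro sum.cong) auto
    also have "\<dots> = mat_mult n X (\<lambda>i j. A (f i) (f j)) (g k) (g l)"
      using X_comm g(1) kl by simp
    also have "\<dots> = (\<Sum>m<n. X (g k) (g (f m)) * A (f m) l)"
      unfolding mat_mult_def using g(2,3) kl by (intro sum.cong) auto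
    also have "\<dots> = mat_mult n Y A k l"
      unfolding mat_mult_def Y_def by (rule reindex)
    finally show "mat_mult n A Y k l = mat_mult n Y A k l" .
  qed
  from ssp[unfolded SSP_def, rule_format, OF this f_less[OF ij(1)] f_less[OF ij(2)]]
  have "Y (f i) (f j) = 0" .
  then show "X i j = 0"
    using ij g by (simp add: Y_def)
qed

section \<open>A realization of the complement of \<open>K\<^sub>3 \<union> K\<^sub>1\<^sub>,\<^sub>n\<^sub>-\<^sub>4\<close>\<close>

definition row_gram :: "nat \<Rightarrow> (nat \<Rightarrow> nat \<Rightarrow> real) \<Rightarrow> nat \<Rightarrow> nat \<Rightarrow> real" where
  "row_gram d U i j = (\<Sum>a<d. U i a * U j a)"

lemma sym_mat_row_gram: "sym_mat n (row_gram d U)"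
  by (simp add: sym_mat_def row_gram_def mult.commute)

lemma row_gram_square:
  assumes cols: "\<And>a b. a < d \<Longrightarrow> b < d \<Longrightarrow> (\<Sum>k<n. U k a * U k b) = (if a = b then S else 0)"
  shows "mat_mult n (row_gram d U) (row_gram d U) i j = S * row_gram d U i j"
proof -
  have "mat_mult n (row_gram d U) (row_gram d U) i j
      = (\<Sum>k<n. \<Sum>a<d. \<Sum>b<d. U i a * U j b * (U k a * U k b))"
    unfolding mat_mult_def row_gram_def by (simp add: sum_product mult_ac)
  also have "\<dots> = (\<Sum>a<d. \<Sum>b<d. \<Sum>k<n. U i a * U j b * (U k a * U k b))"
    by (subst sum.swap) (simp add: sum.swap[of _ "{..<n}"])
  also have "\<dots> = (\<Sum>a<d. \<Sum>b<d. U i a * U j b * (\<Sum>k<n. U k a * U k b))"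
    by (simp add: sum_distrib_left)
  also have "\<dots> = (\<Sum>a<d. U i a * U j a * S)"
    using cols by (simp add: if_distrib[of "\<lambda>x. _ * x"] cong: if_cong)
  finally show ?thesis
    by (simp add: row_gram_def sum_distrib_left mult_ac)
qed

lemma sum_lessThan_const_tail:
  fixes f :: "nat \<Rightarrow> real"
  assumes "m \<le> n" and "\<And>k. m \<le> k \<Longrightarrow> f k = c"
  shows "(\<Sum>k<n. f k) = (\<Sum>k<m. f k) + (real n - real m) * c"
proof -
  have "(\<Sum>k<n. f k) = (\<Sum>k<m. f k) + (\<Sum>k\<in>{m..<n}. f k)"
    using assms(1) by (metis atLeast0LessThan le0 sum.atLeastLessThan_concat)
  also have "(\<Sum>k\<in>{m..<n}. f k) = (real n - real m) * c"
    using assms by simp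
  finally show ?thesis .
qed

text \<open>The realization is the Gram matrix \<open>U U\<^sup>T\<close> of the rows of the \<open>n \<times> 3\<close> matrix \<open>U\<close> below,
  so an off-diagonal entry vanishes iff the two rows are orthogonal: rows 0--2 are pairwise
  orthogonal (the triangle), row 3 is orthogonal to every later row (the star), and no other
  pair is. Rows 4 and 5 are tuned so that the columns of \<open>U\<close> are orthogonal of equal length,
  which makes \<open>(U U\<^sup>T)\<^sup>2\<close> a multiple of \<open>U U\<^sup>T\<close>.\<close>
definition K3_star_frame :: "nat \<Rightarrow> nat \<Rightarrow> nat \<Rightarrow> real" where
  "K3_star_frame n i a =
    (let p = real n - 6;
         rows = [[3, 0, 0], [0, 3, 0], [0, 0, 3],
                 [5 * (4 * p + 1), 10 * (4 * p + 1), 10 * (4 * p + 1)],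
                 [8 * p + 14, - 44 * p - 5, 40 * p - 2],
                 [56 * p - 2, - 8 * p - 10, - 20 * p + 11]]
     in (if i < 6 then rows ! i else [40, 20, -40]) ! a)"

definition K3_star_frame_norm :: "nat \<Rightarrow> real" where
  "K3_star_frame_norm n = 9 + 225 * (4 * (real n - 6) + 1) ^ 2"

lemma K3_star_frame_orthogonal:
  assumes n: "6 \<le> n" and ab: "a < 3" "b < 3"
  shows "(\<Sum>k<n. K3_star_frame n k a * K3_star_frame n k b) = (if a = b then K3_star_frame_norm n else 0)"
proof -
  have "(\<Sum>k<n. K3_star_frame n k a * K3_star_frame n k b)
      = (\<Sum>k<6. K3_star_frame n k a * K3_star_frame n k b)
        + (real n - 6) * (K3_star_frame n 6 a * K3_star_frame n 6 b)"
    using sum_lessThan_const_tail[OF n] by (simp add: K3_star_frame_def)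
  also have "\<dots> = (if a = b then K3_star_frame_norm n else 0)"
    using ab by (auto simp: less_Suc_eq numeral_3_eq_3 eval_nat_numeral K3_star_frame_def
        K3_star_frame_norm_def power2_eq_square algebra_simps)
  finally show ?thesis .
qed

definition K3_star_realization :: "nat \<Rightarrow> nat \<Rightarrow> nat \<Rightarrow> real" where
  "K3_star_realization n = row_gram 3 (K3_star_frame n)"

lemma K3_star_realization_eq:
  "K3_star_realization n i j = K3_star_frame n i 0 * K3_star_frame n j 0
    + K3_star_frame n i 1 * K3_star_frame n j 1 + K3_star_frame n i 2 * K3_star_frame n j 2"
  by (simp add: K3_star_realization_def row_gram_def eval_nat_numeral)

lemma K3_star_realization_nonzero_iff:
  assumes n: "7 \<le> n" and ij: "i \<noteq> j"
  shows "K3_star_realization n i j \<noteq> 0 \<longleftrightarrow> \<not> K3_star i j"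
proof -
  have "real n \<ge> 7"
    using n by simp
  moreover have "i = 0 \<or> i = 1 \<or> i = 2 \<or> i = 3 \<or> i = 4 \<or> i = 5 \<or> 6 \<le> i"
    and "j = 0 \<or> j = 1 \<or> j = 2 \<or> j = 3 \<or> j = 4 \<or> j = 5 \<or> 6 \<le> j"
    by arith+
  ultimately show ?thesis
    using ij by (elim disjE) (auto simp: K3_star_realization_eq K3_star_frame_def K3_star_def algebra_simps)
qed

lemma K3_star_realization_in_S_graph:
  assumes "7 \<le> n"
  shows "K3_star_realization n \<in> S_graph n (complement K3_star)"
  using K3_star_realization_nonzero_iff[OF assms] sym_mat_row_gram
  by (auto simp: S_graph_def complement_def K3_star_realization_def)

lemma K3_star_realization_square:
  assumes "6 \<le> n"
  shows "mat_mult n (K3_star_realization n) (K3_star_realization n) i j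
    = K3_star_frame_norm n * K3_star_realization n i j"
  unfolding K3_star_realization_def
  by (rule row_gram_square) (rule K3_star_frame_orthogonal[OF assms])

lemma card_eigenvalues_K3_star_realization:
  assumes n: "7 \<le> n"
  shows "card (eigenvalues n (K3_star_realization n)) = 2"
proof -
  have "(4 * (real n - 6) + 1) ^ 2 > 0"
    using n by simp
  then have norm: "K3_star_frame_norm n > 9"
    by (simp add: K3_star_frame_norm_def)
  have "K3_star_realization n 0 0 = 9"
    by (simp add: K3_star_realization_eq K3_star_frame_def)
  with n norm have "eigenvalues n (K3_star_realization n) = {0, K3_star_frame_norm n}"
    by (intro eigenvalues_eq_if_square_eq_scale[where l = 0] K3_star_realization_square) auto
  with norm show ?thesis
    by simp
qed

lemma entry_eq_0_if_hadamard_eq_0: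
  assumes A: "A \<in> S_graph n (complement H)"
    and had: "\<forall>i<n. \<forall>j<n. A i j * X i j = 0" and diag: "\<forall>i<n. X i i = 0"
    and ij: "i < n" "j < n" "\<not> H i j"
  shows "X i j = 0"
proof (cases "i = j")
  case False
  then have "A i j \<noteq> 0"
    using A ij by (simp add: S_graph_def complement_def)
  with had[rule_format, OF ij(1,2)] show ?thesis
    by simp
qed (use diag ij in simp)

lemma mat_mult_K3_star_supported:
  assumes supp: "\<And>i j. i < n \<Longrightarrow> j < n \<Longrightarrow> \<not> K3_star i j \<Longrightarrow> X i j = 0"
    and t: "t < 3" and l: "4 \<le> l" "l < n"
  shows "mat_mult n A X t l = A t 3 * X 3 l"
    and "mat_mult n X A t l = X t 0 * A 0 l + X t 1 * A 1 l + X t 2 * A 2 l"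
proof -
  have "mat_mult n A X t l = (\<Sum>k\<in>{3}. A t k * X k l)"
    unfolding mat_mult_def using l supp
    by (intro sum.mono_neutral_right) (auto simp: K3_star_def)
  then show "mat_mult n A X t l = A t 3 * X 3 l"
    by simp
  have "mat_mult n X A t l = (\<Sum>k\<in>{0, 1, 2}. X t k * A k l)"
    unfolding mat_mult_def using t l supp
    by (intro sum.mono_neutral_right) (auto simp: K3_star_def)
  then show "mat_mult n X A t l = X t 0 * A 0 l + X t 1 * A 1 l + X t 2 * A 2 l"
    by simp
qed

text \<open>The commutation relations at the entries \<open>(0, 6)\<close>, \<open>(1, 6)\<close>, \<open>(2, 6)\<close>, \<open>(1, 4)\<close>, \<open>(2, 4)\<close>
  form a nonsingular linear system in the triangle entries of \<open>X\<close> and \<open>X 3 4\<close>, \<open>X 3 6\<close>.\<close>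
lemma K3_star_realization_commutant_triangle:
  fixes X :: "nat \<Rightarrow> nat \<Rightarrow> real"
  assumes n: "7 \<le> n" and sym: "sym_mat n X" and diag: "\<forall>i<n. X i i = 0"
    and comm: "\<And>t l. t < 3 \<Longrightarrow> l \<in> {4, 6} \<Longrightarrow>
      K3_star_realization n t 3 * X 3 l = X t 0 * K3_star_realization n 0 l
        + X t 1 * K3_star_realization n 1 l + X t 2 * K3_star_realization n 2 l"
  shows "X 0 1 = 0 \<and> X 0 2 = 0 \<and> X 1 2 = 0"
proof -
  define p where "p = real n - 6"
  have p: "p \<ge> 1"
    using n by (simp add: p_def)
  have diag': "X 0 0 = 0" "X 1 1 = 0" "X 2 2 = 0"
    using diag n by auto
  have sym': "X 1 0 = X 0 1" "X 2 0 = X 0 2" "X 2 1 = X 1 2"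
    using sym n by (auto simp: sym_mat_def)
  note entries = K3_star_realization_eq K3_star_frame_def p_def[symmetric]
  have "15 * ((4 * p + 1) * X 3 6) = 60 * X 0 1 - 120 * X 0 2"
    using comm[of 0 6] diag' sym' by (simp add: entries algebra_simps)
  moreover have "30 * ((4 * p + 1) * X 3 6) = 120 * X 0 1 - 120 * X 1 2"
    using comm[of 1 6] diag' sym' by (simp add: entries algebra_simps)
  moreover have "30 * ((4 * p + 1) * X 3 6) = 120 * X 0 2 + 60 * X 1 2"
    using comm[of 2 6] diag' sym' by (simp add: entries algebra_simps)
  ultimately have a: "X 0 1 = 4 * X 0 2" and c: "X 1 2 = 2 * X 0 2"
    by linarith+
  have "30 * ((4 * p + 1) * X 3 4) = X 0 1 * (42 + 24 * p) + X 1 2 * (-6 + 120 * p)"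
    using comm[of 1 4] diag' sym' by (simp add: entries algebra_simps)
  moreover have "30 * ((4 * p + 1) * X 3 4) = X 0 2 * (42 + 24 * p) + X 1 2 * (-15 - 132 * p)"
    using comm[of 2 4] diag' sym' by (simp add: entries algebra_simps)
  ultimately have "X 0 2 * (144 + 576 * p) = 0"
    unfolding a c by (simp add: algebra_simps)
  with p have "X 0 2 = 0"
    by simp
  with a c show ?thesis
    by simp
qed

lemma K3_star_realization_SSP:
  assumes n: "7 \<le> n"
  shows "SSP n (K3_star_realization n)"
  unfolding SSP_def
proof (intro allI impI)
  fix X :: "nat \<Rightarrow> nat \<Rightarrow> real" and i j
  let ?R = "K3_star_realization n"
  assume X: "sym_mat n X \<and> (\<forall>i<n. \<forall>j<n. ?R i j * X i j = 0) \<and> (\<forall>i<n. X i i = 0) \<and>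
    (\<forall>i<n. \<forall>j<n. mat_mult n ?R X i j = mat_mult n X ?R i j)"
  assume ij: "i < n" "j < n"
  from X have sym: "sym_mat n X" and had: "\<forall>i<n. \<forall>j<n. ?R i j * X i j = 0"
    and diag: "\<forall>i<n. X i i = 0" and comm: "\<forall>i<n. \<forall>j<n. mat_mult n ?R X i j = mat_mult n X ?R i j"
    by simp_all
  have supp: "X i j = 0" if "i < n" "j < n" "\<not> K3_star i j" for i j
    using entry_eq_0_if_hadamard_eq_0[OF K3_star_realization_in_S_graph[OF n] had diag] that .
  have star_eq: "?R t 3 * X 3 l = X t 0 * ?R 0 l + X t 1 * ?R 1 l + X t 2 * ?R 2 l"
    if "t < 3" "4 \<le> l" "l < n" for t l
    using comm[rule_format, of t l] mat_mult_K3_star_supported[OF supp that] that by simp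
  have triangle: "X 0 1 = 0 \<and> X 0 2 = 0 \<and> X 1 2 = 0"
    using n by (intro K3_star_realization_commutant_triangle[OF n sym diag] star_eq) auto
  have sym': "X i j = X j i" if "i < n" "j < n" for i j
    using sym that by (simp add: sym_mat_def)
  have star: "X 3 l = 0" if "4 \<le> l" "l < n" for l
  proof -
    have "?R 1 3 * X 3 l = 0"
      using star_eq[of 1 l] that triangle diag sym'[of 1 0] n by simp
    moreover have "?R 1 3 \<noteq> 0"
      using n by (simp add: K3_star_realization_eq K3_star_frame_def)
    ultimately show ?thesis
      by simp
  qed
  show "X i j = 0"
  proof (cases "K3_star i j")
    case True
    then consider "i < 3" "j < 3" "i \<noteq> j" | "i = 3" "4 \<le> j" | "j = 3" "4 \<le> i"
      by (auto simp: K3_star_def)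
    then show ?thesis
    proof cases
      case 1
      then have "(i, j) \<in> {(0, 1), (0, 2), (1, 2), (1, 0), (2, 0), (2, 1)}"
        by auto
      with triangle sym'[of 1 0] sym'[of 2 0] sym'[of 2 1] n show ?thesis
        by auto
    qed (use star sym' ij in auto)
  qed (use supp ij in simp)
qed

theorem mainTheorem17:
  fixes n :: nat and G :: "nat \<Rightarrow> nat \<Rightarrow> bool"
  assumes "n \<ge> 7"
    and "graph_iso n G K3_star"
  shows "q_graph n (complement G) = 2 \<and>
    (\<exists>A \<in> S_graph n (complement G). card (eigenvalues n A) = 2 \<and> SSP n A)"
proof -
  obtain f where f: "bij_betw f {..<n} {..<n}"
    and iso: "\<And>i j. i < n \<Longrightarrow> j < n \<Longrightarrow> G i j \<longleftrightarrow> K3_star (f i) (f j)"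
    using assms(2) unfolding graph_iso_def by blast
  define A where "A = (\<lambda>i j. K3_star_realization n (f i) (f j))"
  have A: "A \<in> S_graph n (complement G)"
    unfolding A_def using S_graph_complement_permute[OF f iso K3_star_realization_in_S_graph[OF assms(1)]] .
  have card: "card (eigenvalues n A) = 2"
    unfolding A_def eigenvalues_permute[OF f] using card_eigenvalues_K3_star_realization[OF assms(1)] .
  have ssp: "SSP n A"
    unfolding A_def using SSP_permute[OF f K3_star_realization_SSP[OF assms(1)]] .
  define i j where "i = inv_into {..<n} f 0" and "j = inv_into {..<n} f 3"
  have hit: "0 \<in> f ` {..<n}" "3 \<in> f ` {..<n}"
    using f assms(1) by (simp_all add: bij_betw_imp_surj_on)
  have ij: "i < n" "j < n"
    using inv_into_into[OF hit(1)] inv_into_into[OF hit(2)] by (simp_all add: i_def j_def)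
  have "f i = 0" "f j = 3"
    using f_inv_into_f[OF hit(1)] f_inv_into_f[OF hit(2)] by (simp_all add: i_def j_def)
  then have "i \<noteq> j" and "complement G i j"
    using iso[OF ij] by (auto simp: complement_def K3_star_def)
  with A card ij have "q_graph n (complement G) = 2"
    by (intro q_graph_eq_2)
  with A card ssp show ?thesis
    by blast
qed

end
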